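(* Let $n \ge 3$ and let $x_1, \dots, x_n \in \mathbb{R}$ be pairwise distinct. Let $\mathbb{H} = \{\theta \in \mathbb{C} : \Im\theta > 0\}$, $h(\theta) = \prod_{j=1}^n (x_j - \theta)$, $q(\theta) = \theta - n\,\frac{h(\theta)}{h'(\theta)}$, and $Q(\theta) = q(q(\theta))$ for $\theta \in \mathbb{H}$ (this is a holomorphic map $\mathbb{H} \to \mathbb{H}$). Let $\hat\theta \in \mathbb{H}$ be the maximum likelihood estimate of the sample, i.e. the maximizer over $\mathbb{H}$ of $L(\theta) = \prod_{j=1}^n \frac{\Im\theta}{\pi\left((x_j - \Re\theta)^2 + (\Im\theta)^2\right)}$. Then: (i) the equation $z = Q(z)$ has a unique solution in $\mathbb{H}$, and it equals $\hat\theta$; (ii) this unique solution $\hat\theta$ of $z = Q(z)$ in $\mathbb{H}$ is a fixed point of $Q$; (iii) for every $z \in \mathbb{H}$, $\lim_{m\to\infty} Q^m(z) = \hat\theta$, where $Q^m$ denotes the $m$-fold iterate of $Q$, and this convergence is exponentially fast, i.e. there exist $C > 0$ and $r \in (0,1)$ (depending on $z$ and the sample) with $|Q^m(z) - \hat\theta| \le C r^m$ for all $m$.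
   Context: The Cauchy distribution $C(\theta)$ with $\theta = \mu + i\sigma \in \mathbb{H}$ ($\mu \in \mathbb{R}$, $\sigma>0$) has density $f(x;\theta) = \frac{\sigma}{\pi}\frac{1}{(x-\mu)^2+\sigma^2}$ on $\mathbb{R}$. The likelihood of the sample is $L(\theta) = \prod_{j=1}^n f(x_j;\theta)$; for $n \ge 3$ distinct observations its maximizer over $\mathbb{H}$ exists and is unique, and it is called the maximum likelihood estimate $\hat\theta$. Since the $x_j$ are distinct, all zeros of $h'$ are real, so $q$ is defined on $\mathbb{H}$; $q$ maps $\mathbb{H}$ into the lower half-plane and the lower half-plane into $\mathbb{H}$. *)

theory Defs
  imports "HOL-Analysis.Analysis"
begin

text \<open>Sample x_0, ..., x_(n-1) given as a function xs on indices below n.\<close>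

definition upper_half :: "complex set" where
  "upper_half = {z. Im z > 0}"

definition cauchy_h :: "nat \<Rightarrow> (nat \<Rightarrow> real) \<Rightarrow> complex \<Rightarrow> complex" where
  "cauchy_h n xs \<theta> = (\<Prod>j<n. complex_of_real (xs j) - \<theta>)"

definition cauchy_q :: "nat \<Rightarrow> (nat \<Rightarrow> real) \<Rightarrow> complex \<Rightarrow> complex" where
  "cauchy_q n xs \<theta> = \<theta> - of_nat n * cauchy_h n xs \<theta> / deriv (cauchy_h n xs) \<theta>"

definition cauchy_Q :: "nat \<Rightarrow> (nat \<Rightarrow> real) \<Rightarrow> complex \<Rightarrow> complex" where
  "cauchy_Q n xs \<theta> = cauchy_q n xs (cauchy_q n xs \<theta>)"

definition cauchy_lik :: "nat \<Rightarrow> (nat \<Rightarrow> real) \<Rightarrow> complex \<Rightarrow> real" where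
  "cauchy_lik n xs \<theta> =
     (\<Prod>j<n. Im \<theta> / (pi * ((xs j - Re \<theta>)\<^sup>2 + (Im \<theta>)\<^sup>2)))"

end

theory Submission
  imports Defs "HOL-Complex_Analysis.Complex_Analysis"
begin

text \<open>
  Off the real line q \<theta> = \<theta> - n / S \<theta>, where S = h'/h is the score
  \<open>\<Sum>\<^sub>j 1 / (\<theta> - x\<^sub>j)\<close>. For \<open>Im \<theta> > 0\<close> one has
  \<open>Im (S \<theta>) = - Im \<theta> \<Sum>\<^sub>j \<bar>\<theta> - x\<^sub>j\<bar>\<^sup>-\<^sup>2\<close>, and the strict Cauchy-Schwarz inequality
  \<open>\<bar>S \<theta>\<bar>\<^sup>2 < n \<Sum>\<^sub>j \<bar>\<theta> - x\<^sub>j\<bar>\<^sup>-\<^sup>2\<close> shows that q maps the upper half-plane into the lower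
  one; by conjugation symmetry it maps the lower one back, so Q is a holomorphic self-map
  of the upper half-plane.

  The likelihood equations at the maximiser a say exactly that \<open>S a = n / (a - cnj a)\<close>.
  Hence q exchanges a and \<open>cnj a\<close>, so a is a fixed point of Q, and
  \<open>q' a = - (\<Sum>\<^sub>j y\<^sub>j\<^sup>2) / n\<close> with pairwise distinct unimodular \<open>y\<^sub>j = (cnj a - x\<^sub>j) / (a - x\<^sub>j)\<close>;
  for \<open>n \<ge> 3\<close> the squares \<open>y\<^sub>j\<^sup>2\<close> cannot all coincide, so \<open>\<bar>q' a\<bar> < 1\<close>, and likewise at
  \<open>cnj a\<close>. Conjugated by a Cayley transform, Q becomes a self-map of the unit disc fixing 0
  with derivative of modulus less than 1, which by the Schwarz lemma satisfies
  \<open>\<bar>f w\<bar> \<le> c \<bar>w\<bar>\<close> with \<open>c < 1\<close> on every smaller disc. So every orbit converges to a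
  geometrically, and a is the only fixed point.
\<close>

section \<open>Strict Cauchy-Schwarz inequality\<close>

lemma sum_sum_norm_diff_power2:
  fixes u :: "'i \<Rightarrow> 'a::real_inner"
  assumes "finite I"
  shows "(\<Sum>i\<in>I. \<Sum>l\<in>I. (norm (u i - u l))\<^sup>2)
           = 2 * card I * (\<Sum>i\<in>I. (norm (u i))\<^sup>2) - 2 * (norm (\<Sum>i\<in>I. u i))\<^sup>2"
proof -
  have "(\<Sum>i\<in>I. \<Sum>l\<in>I. (norm (u i - u l))\<^sup>2)
          = (\<Sum>i\<in>I. \<Sum>l\<in>I. (norm (u i))\<^sup>2 + (norm (u l))\<^sup>2 - 2 * (u i \<bullet> u l))"
    by (simp add: power2_norm_eq_inner inner_commute algebra_simps)
  also have "\<dots> = 2 * card I * (\<Sum>i\<in>I. (norm (u i))\<^sup>2) - 2 * ((\<Sum>i\<in>I. u i) \<bullet> (\<Sum>l\<in>I. u l))"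
    by (simp add: sum.distrib sum_subtractf sum_distrib_left inner_sum_left inner_sum_right mult.assoc)
       (subst sum.swap, simp add: inner_commute)
  finally show ?thesis
    by (simp add: power2_norm_eq_inner)
qed

lemma norm_sum_power2_less:
  fixes u :: "'i \<Rightarrow> 'a::real_inner"
  assumes "finite I" "j \<in> I" "k \<in> I" "u j \<noteq> u k"
  shows "(norm (\<Sum>i\<in>I. u i))\<^sup>2 < card I * (\<Sum>i\<in>I. (norm (u i))\<^sup>2)"
proof -
  have "0 < (norm (u j - u k))\<^sup>2"
    using assms(4) by simp
  also have "\<dots> \<le> (\<Sum>l\<in>I. (norm (u j - u l))\<^sup>2)"
    using assms by (intro member_le_sum) auto
  also have "\<dots> \<le> (\<Sum>i\<in>I. \<Sum>l\<in>I. (norm (u i - u l))\<^sup>2)"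
    using assms by (intro member_le_sum[where f = "\<lambda>i. \<Sum>l\<in>I. (norm (u i - u l))\<^sup>2"] sum_nonneg) auto
  finally show ?thesis
    unfolding sum_sum_norm_diff_power2[OF assms(1)] by simp
qed

lemma norm_sum_power2_unimodular_less:
  fixes y :: "'i \<Rightarrow> complex"
  assumes "finite I" "3 \<le> card I" "inj_on y I" "\<And>i. i \<in> I \<Longrightarrow> norm (y i) = 1"
  shows "norm (\<Sum>i\<in>I. (y i)\<^sup>2) < card I"
proof -
  obtain B where "B \<subseteq> I" "card B = 3"
    using obtain_subset_with_card_n[OF assms(2)] by blast
  then obtain i j l where ijl: "i \<in> I" "j \<in> I" "l \<in> I" "i \<noteq> j" "j \<noteq> l" "i \<noteq> l"
    by (auto simp: card_3_iff)
  have "\<exists>m\<in>I. (y i)\<^sup>2 \<noteq> (y m)\<^sup>2"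
  proof (rule ccontr)
    assume "\<not> ?thesis"
    then have "y j = - y i" "y l = - y i"
      using ijl inj_onD[OF assms(3)] by (metis power2_eq_iff)+
    then show False
      using ijl inj_onD[OF assms(3), of j l] by simp
  qed
  then obtain m where "m \<in> I" "(y i)\<^sup>2 \<noteq> (y m)\<^sup>2" ..
  then have "(norm (\<Sum>i\<in>I. (y i)\<^sup>2))\<^sup>2 < card I * (\<Sum>i\<in>I. (norm ((y i)\<^sup>2))\<^sup>2)"
    using ijl by (intro norm_sum_power2_less[OF assms(1)]) auto
  also have "(\<Sum>i\<in>I. (norm ((y i)\<^sup>2))\<^sup>2) = card I"
    using assms(4) by (simp add: norm_power)
  finally show ?thesis
    by (simp add: power2_less_imp_less flip: power2_eq_square)
qed

section \<open>Attracting fixed points of self-maps of the upper half-plane\<close>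

lemma Schwarz_Lemma_strict:
  assumes holf: "f holomorphic_on ball 0 1" and f0: "f 0 = 0"
    and maps: "\<And>z. norm z < 1 \<Longrightarrow> norm (f z) < 1"
    and df0: "norm (deriv f 0) < 1" and z: "norm z < 1" "z \<noteq> 0"
  shows "norm (f z) < norm z"
proof -
  have "\<not> (\<exists>\<alpha>. (\<forall>z. norm z < 1 \<longrightarrow> f z = \<alpha> * z) \<and> norm \<alpha> = 1)"
  proof
    assume "\<exists>\<alpha>. (\<forall>z. norm z < 1 \<longrightarrow> f z = \<alpha> * z) \<and> norm \<alpha> = 1"
    then obtain \<alpha> where \<alpha>: "\<And>z. norm z < 1 \<Longrightarrow> f z = \<alpha> * z" "norm \<alpha> = 1"
      by blast
    have "((\<lambda>z. \<alpha> * z) has_field_derivative \<alpha>) (at 0)"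
      by (auto intro!: derivative_eq_intros)
    then have "(f has_field_derivative \<alpha>) (at 0)"
      by (rule has_field_derivative_transform_within_open[where S = "ball 0 1"]) (use \<alpha> in auto)
    then have "deriv f 0 = \<alpha>"
      by (rule DERIV_imp_deriv)
    with df0 \<alpha>(2) show False
      by simp
  qed
  then show ?thesis
    using Schwarz_Lemma(1,3)[OF holf f0 maps z(1)] z by (meson order_le_less)
qed

lemma Schwarz_contraction:
  assumes holf: "f holomorphic_on ball 0 1" and f0: "f 0 = 0"
    and maps: "\<And>z. norm z < 1 \<Longrightarrow> norm (f z) < 1"
    and df0: "norm (deriv f 0) < 1" and "\<rho> < 1"
  obtains c where "0 \<le> c" "c < 1" "\<And>z. norm z \<le> \<rho> \<Longrightarrow> norm (f z) \<le> c * norm z"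
proof -
  \<comment> \<open>c is the maximum of \<open>\<bar>f z / z\<bar>\<close> on the closed disc of radius \<open>\<rho>\<close>\<close>
  obtain h where holh: "h holomorphic_on ball 0 1"
    and fh: "\<And>z. norm z < 1 \<Longrightarrow> f z = z * h z" and h0: "deriv f 0 = h 0"
    using Schwarz3[OF holf f0] by blast
  have h_less: "norm (h z) < 1" if "norm z < 1" for z
    using df0 h0 Schwarz_Lemma_strict[OF holf f0 maps df0 that] fh[OF that]
    by (cases "z = 0") (auto simp: norm_mult)
  define R where "R = max \<rho> 0"
  have sub: "cball 0 R \<subseteq> ball (0::complex) 1"
    using \<open>\<rho> < 1\<close> by (auto simp: R_def)
  have "continuous_on (cball 0 R) (\<lambda>z. norm (h z))"
    by (intro continuous_intros holomorphic_on_imp_continuous_on holomorphic_on_subset[OF holh sub])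
  then obtain z\<^sub>m where zm: "z\<^sub>m \<in> cball 0 R" "\<And>z. z \<in> cball 0 R \<Longrightarrow> norm (h z) \<le> norm (h z\<^sub>m)"
    using continuous_attains_sup[OF compact_cball] by (metis R_def centre_in_cball empty_iff max.cobounded2)
  show ?thesis
  proof
    show "norm (h z\<^sub>m) < 1"
      using h_less zm(1) sub by auto
    show "norm (f z) \<le> norm (h z\<^sub>m) * norm z" if "norm z \<le> \<rho>" for z
    proof -
      have "z \<in> cball 0 R"
        using that by (simp add: R_def)
      then have "norm (f z) = norm (h z) * norm z" and "norm (h z) \<le> norm (h z\<^sub>m)"
        using fh zm(2) sub by (auto simp: norm_mult)
      then show ?thesis
        by (simp add: mult_right_mono)
    qed
  qed simp
qed

lemma norm_funpow_le_contraction: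
  fixes f :: "'a::real_normed_vector \<Rightarrow> 'a"
  assumes "0 \<le> c" "c \<le> 1" and contr: "\<And>w. norm w \<le> \<rho> \<Longrightarrow> norm (f w) \<le> c * norm w"
    and "norm w \<le> \<rho>"
  shows "norm ((f ^^ m) w) \<le> c ^ m * norm w"
proof (induction m)
  case (Suc m)
  have "c ^ m * norm w \<le> norm w"
    using assms(1,2) by (simp add: mult_left_le_one_le power_le_one)
  with Suc.IH have "norm ((f ^^ m) w) \<le> \<rho>"
    using assms(4) by linarith
  then have "norm ((f ^^ Suc m) w) \<le> c * norm ((f ^^ m) w)"
    by (simp add: contr)
  also have "\<dots> \<le> c ^ Suc m * norm w"
    using Suc.IH assms(1) by (simp add: mult_left_mono mult.assoc)
  finally show ?case .
qed simp

lemma funpow_semiconj: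
  assumes "\<And>w. w \<in> S \<Longrightarrow> f w \<in> S" and "\<And>w. w \<in> S \<Longrightarrow> g (f w) = F (g w)" and "w \<in> S"
  shows "(F ^^ m) (g w) = g ((f ^^ m) w)"
proof -
  have "(f ^^ m) w \<in> S \<and> (F ^^ m) (g w) = g ((f ^^ m) w)"
    by (induction m) (use assms in auto)
  then show ?thesis ..
qed

lemma LIMSEQ_norm_diff_le_geometric:
  fixes X :: "nat \<Rightarrow> 'a::real_normed_vector"
  assumes "\<bar>r\<bar> < 1" "\<And>m. norm (X m - a) \<le> C * r ^ m"
  shows "X \<longlonglongrightarrow> a"
proof -
  have "(\<lambda>m. C * r ^ m) \<longlonglongrightarrow> 0"
    using assms(1) by (intro tendsto_mult_right_zero LIMSEQ_power_zero) simp
  then have "(\<lambda>m. X m - a) \<longlonglongrightarrow> 0"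
    by (rule Lim_null_comparison[rotated]) (use assms(2) in auto)
  then show ?thesis
    by (rule LIM_zero_cancel)
qed

definition cayley :: "complex \<Rightarrow> complex \<Rightarrow> complex" where
  "cayley a z = (z - a) / (z - cnj a)"

definition cayley_inv :: "complex \<Rightarrow> complex \<Rightarrow> complex" where
  "cayley_inv a w = (a - cnj a * w) / (1 - w)"

lemma open_upper_half: "open upper_half"
  unfolding upper_half_def by (rule open_halfspace_Im_gt)

lemma upper_half_ne_cnj: "z \<in> upper_half \<Longrightarrow> a \<in> upper_half \<Longrightarrow> z \<noteq> cnj a"
  by (auto simp: upper_half_def)

lemma norm_cayley_less_1:
  assumes "a \<in> upper_half" "z \<in> upper_half"
  shows "norm (cayley a z) < 1"
proof -
  have "(norm (z - a))\<^sup>2 < (norm (z - cnj a))\<^sup>2"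
    using assms unfolding cmod_power2 upper_half_def by (simp add: power2_eq_square algebra_simps)
  then have "norm (z - a) < norm (z - cnj a)"
    by (simp add: power2_less_imp_less)
  then show ?thesis
    by (simp add: cayley_def norm_divide divide_less_eq)
qed

lemma cayley_inv_in_upper_half:
  assumes "a \<in> upper_half" "norm w < 1"
  shows "cayley_inv a w \<in> upper_half"
proof -
  have w1: "1 - w \<noteq> 0"
    using assms(2) by auto
  have "Im (cayley_inv a w) = Im a * (1 - (norm w)\<^sup>2) / (norm (1 - w))\<^sup>2"
    using w1 unfolding cayley_inv_def Im_divide cmod_power2 by (simp add: algebra_simps power2_eq_square)
  moreover have "(norm w)\<^sup>2 < 1"
    using assms(2) by (simp add: power_less_one_iff)
  ultimately show ?thesis
    using assms w1 by (simp add: upper_half_def)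
qed

lemma cayley_inv_cayley:
  assumes "Im a \<noteq> 0" "z \<noteq> cnj a"
  shows "cayley_inv a (cayley a z) = z"
proof -
  have ne: "z - cnj a \<noteq> 0" "a - cnj a \<noteq> 0"
    using assms by (auto simp: complex_eq_iff)
  have "1 - cayley a z = (a - cnj a) / (z - cnj a)"
    using ne by (simp add: cayley_def field_simps)
  moreover have "a - cnj a * cayley a z = (a - cnj a) * z / (z - cnj a)"
    using ne by (simp add: cayley_def field_simps)
  ultimately show ?thesis
    using ne by (simp add: cayley_inv_def)
qed

lemma cayley_inv_minus_centre:
  assumes "w \<noteq> 1"
  shows "cayley_inv a w - a = w * (a - cnj a) / (1 - w)"
  using assms by (simp add: cayley_inv_def field_simps)

lemma cayley_has_field_derivative:
  assumes "z \<noteq> cnj a"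
  shows "(cayley a has_field_derivative (a - cnj a) / (z - cnj a)\<^sup>2) (at z)"
proof -
  have "z - cnj a \<noteq> 0"
    using assms by simp
  then show ?thesis
    unfolding cayley_def[abs_def]
    by (auto intro!: derivative_eq_intros simp: field_simps power2_eq_square)
qed

lemma cayley_inv_has_field_derivative:
  assumes "w \<noteq> 1"
  shows "(cayley_inv a has_field_derivative (a - cnj a) / (1 - w)\<^sup>2) (at w)"
proof -
  have "1 - w \<noteq> 0"
    using assms by simp
  then show ?thesis
    unfolding cayley_inv_def[abs_def]
    by (auto intro!: derivative_eq_intros simp: field_simps power2_eq_square)
qed

lemma norm_cayley_inv_minus_centre_le:
  assumes "norm w \<le> \<rho>" "\<rho> < 1"
  shows "norm (cayley_inv a w - a) \<le> norm (a - cnj a) / (1 - \<rho>) * norm w"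
proof -
  have far: "1 - \<rho> \<le> norm (1 - w)"
    using assms(1) norm_triangle_ineq2[of 1 w] by simp
  have "w \<noteq> 1"
    using assms by auto
  then have "norm (cayley_inv a w - a) = norm (a - cnj a) * norm w / norm (1 - w)"
    by (simp add: cayley_inv_minus_centre norm_mult norm_divide mult.commute)
  also have "\<dots> \<le> norm (a - cnj a) * norm w / (1 - \<rho>)"
    using far assms(2) by (intro divide_left_mono mult_pos_pos) auto
  finally show ?thesis
    by simp
qed

lemma cayley_conjugate_self_map:
  assumes holF: "F holomorphic_on upper_half" and maps: "F ` upper_half \<subseteq> upper_half"
    and a: "a \<in> upper_half" "F a = a"
  defines "f \<equiv> cayley a \<circ> F \<circ> cayley_inv a"
  shows "f holomorphic_on ball 0 1" and "f 0 = 0" and "\<And>w. norm w < 1 \<Longrightarrow> norm (f w) < 1"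
    and "deriv f 0 = deriv F a"
    and "\<And>z. z \<in> upper_half \<Longrightarrow> (F ^^ m) z = cayley_inv a ((f ^^ m) (cayley a z))"
proof -
  define k where "k = a - cnj a"
  have k0: "k \<noteq> 0"
    using a(1) by (simp add: k_def upper_half_def complex_eq_iff)
  have F_in: "F (cayley_inv a w) \<in> upper_half" if "norm w < 1" for w
    using maps cayley_inv_in_upper_half[OF a(1) that] by blast
  show f_maps: "norm (f w) < 1" if "norm w < 1" for w
    using norm_cayley_less_1[OF a(1) F_in[OF that]] by (simp add: f_def)
  have df: "(f has_field_derivative
              (k / (F (cayley_inv a w) - cnj a)\<^sup>2) * deriv F (cayley_inv a w) * (k / (1 - w)\<^sup>2)) (at w)"
    if "norm w < 1" for w
  proof -
    have "w \<noteq> 1" "F (cayley_inv a w) \<noteq> cnj a"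
      using that upper_half_ne_cnj[OF F_in[OF that] a(1)] by auto
    then show ?thesis
      unfolding f_def k_def
      by (intro DERIV_chain cayley_has_field_derivative cayley_inv_has_field_derivative
          holomorphic_derivI[OF holF open_upper_half cayley_inv_in_upper_half[OF a(1) that]])
  qed
  show "f holomorphic_on ball 0 1"
    unfolding holomorphic_on_open[OF open_ball] using df mem_ball_0 by metis
  show "f 0 = 0"
    by (simp add: f_def cayley_inv_def a(2) cayley_def)
  show "deriv f 0 = deriv F a"
    using DERIV_imp_deriv[OF df[of 0]] k0 by (simp add: cayley_inv_def a(2) k_def power2_eq_square)
  show "(F ^^ m) z = cayley_inv a ((f ^^ m) (cayley a z))" if z: "z \<in> upper_half" for z
  proof -
    have Ima: "Im a \<noteq> 0"
      using a(1) by (simp add: upper_half_def)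
    have "cayley_inv a (f w) = F (cayley_inv a w)" if "w \<in> ball 0 1" for w
      using cayley_inv_cayley[OF Ima upper_half_ne_cnj[OF F_in a(1)]] that
      by (simp add: f_def)
    then have "(F ^^ m) (cayley_inv a (cayley a z)) = cayley_inv a ((f ^^ m) (cayley a z))"
      using f_maps norm_cayley_less_1[OF a(1) z] by (intro funpow_semiconj[where S = "ball 0 1"]) auto
    then show ?thesis
      using cayley_inv_cayley[OF Ima upper_half_ne_cnj[OF z a(1)]] by simp
  qed
qed

lemma attracting_fixpoint_upper_half_geometric:
  assumes holF: "F holomorphic_on upper_half" and maps: "F ` upper_half \<subseteq> upper_half"
    and a: "a \<in> upper_half" "F a = a" and dFa: "norm (deriv F a) < 1" and z: "z \<in> upper_half"
  obtains C r where "C > 0" "0 < r" "r < 1" "\<And>m. norm ((F ^^ m) z - a) \<le> C * r ^ m"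
proof -
  define f where "f = cayley a \<circ> F \<circ> cayley_inv a"
  note conjugate = cayley_conjugate_self_map[OF holF maps a, folded f_def]
  define \<rho> where "\<rho> = norm (cayley a z)"
  have \<rho>1: "\<rho> < 1"
    unfolding \<rho>_def by (rule norm_cayley_less_1[OF a(1) z])
  obtain c where c: "0 \<le> c" "c < 1" "\<And>w. norm w \<le> \<rho> \<Longrightarrow> norm (f w) \<le> c * norm w"
    using Schwarz_contraction[OF conjugate(1,2,3)] conjugate(4) dFa \<rho>1 by metis
  define B where "B = norm (a - cnj a) / (1 - \<rho>) * \<rho>"
  have B0: "0 \<le> B"
    unfolding B_def using \<rho>1 by (simp add: \<rho>_def)
  have bound: "norm ((F ^^ m) z - a) \<le> B * c ^ m" for m
  proof -
    have W: "norm ((f ^^ m) (cayley a z)) \<le> c ^ m * \<rho>"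
      unfolding \<rho>_def using c by (intro norm_funpow_le_contraction) (auto simp: \<rho>_def)
    moreover have "c ^ m * \<rho> \<le> \<rho>"
      using c by (simp add: \<rho>_def mult_left_le_one_le power_le_one)
    ultimately have "norm ((F ^^ m) z - a) \<le> norm (a - cnj a) / (1 - \<rho>) * norm ((f ^^ m) (cayley a z))"
      unfolding conjugate(5)[OF z] using \<rho>1 by (intro norm_cayley_inv_minus_centre_le) auto
    also have "\<dots> \<le> norm (a - cnj a) / (1 - \<rho>) * (c ^ m * \<rho>)"
      using W \<rho>1 by (intro mult_left_mono) auto
    finally show ?thesis
      by (simp add: B_def mult_ac)
  qed
  show ?thesis
  proof
    show "0 < B + 1" "0 < (1 + c) / 2" "(1 + c) / 2 < 1"
      using B0 c by auto
    show "norm ((F ^^ m) z - a) \<le> (B + 1) * ((1 + c) / 2) ^ m" for m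
    proof -
      have "B * c ^ m \<le> (B + 1) * ((1 + c) / 2) ^ m"
        using B0 c by (intro mult_mono power_mono) auto
      then show ?thesis
        using bound[of m] by linarith
    qed
  qed
qed

lemma attracting_fixpoint_upper_half_tendsto:
  assumes "F holomorphic_on upper_half" "F ` upper_half \<subseteq> upper_half"
    and "a \<in> upper_half" "F a = a" "norm (deriv F a) < 1" and "z \<in> upper_half"
  shows "(\<lambda>m. (F ^^ m) z) \<longlonglongrightarrow> a"
proof -
  obtain C r where "0 < r" "r < 1" "\<And>m. norm ((F ^^ m) z - a) \<le> C * r ^ m"
    using attracting_fixpoint_upper_half_geometric[OF assms] by blast
  then show ?thesis
    by (intro LIMSEQ_norm_diff_le_geometric[of r _ _ C]) auto
qed

lemma attracting_fixpoint_upper_half_unique: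
  assumes "F holomorphic_on upper_half" "F ` upper_half \<subseteq> upper_half"
    and "a \<in> upper_half" "F a = a" "norm (deriv F a) < 1"
  shows "{z \<in> upper_half. z = F z} = {a}"
proof (intro equalityI subsetI)
  fix z assume "z \<in> {z \<in> upper_half. z = F z}"
  then have z: "z \<in> upper_half" "F z = z"
    by auto
  have "(F ^^ m) z = z" for m
    using z(2) by (induction m) simp_all
  then have "(\<lambda>m. z) \<longlonglongrightarrow> a"
    using attracting_fixpoint_upper_half_tendsto[OF assms z(1)] by simp
  then show "z \<in> {a}"
    using LIMSEQ_unique[OF tendsto_const] by blast
qed (use assms(3,4) in auto)

section \<open>The map q\<close>

definition cauchy_score :: "nat \<Rightarrow> (nat \<Rightarrow> real) \<Rightarrow> complex \<Rightarrow> complex" where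
  "cauchy_score n xs z = (\<Sum>j<n. 1 / (z - of_real (xs j)))"

lemma cauchy_score_cnj: "cauchy_score n xs (cnj z) = cnj (cauchy_score n xs z)"
  by (simp add: cauchy_score_def cnj_sum)

lemma Im_cauchy_score:
  "Im (cauchy_score n xs z) = - Im z * (\<Sum>j<n. (norm (1 / (z - of_real (xs j))))\<^sup>2)"
  by (simp add: cauchy_score_def Im_sum Im_divide' norm_divide power_divide sum_distrib_left)

lemma cauchy_h_has_field_derivative:
  assumes "Im z \<noteq> 0"
  shows "(cauchy_h n xs has_field_derivative cauchy_h n xs z * cauchy_score n xs z) (at z)"
proof -
  have "((\<lambda>z. \<Prod>j<n. of_real (xs j) - z) has_field_derivative
          (\<Prod>j<n. of_real (xs j) - z) * (\<Sum>j<n. - 1 / (of_real (xs j) - z))) (at z)"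
    using assms by (intro has_field_derivative_prod') (auto intro!: derivative_eq_intros)
  moreover have "(\<Sum>j<n. - 1 / (of_real (xs j) - z)) = cauchy_score n xs z"
    by (simp add: cauchy_score_def minus_divide_left[symmetric] minus_divide_right)
  ultimately show ?thesis
    by (simp add: cauchy_h_def[abs_def])
qed

lemma cauchy_q_eq_score:
  assumes "Im z \<noteq> 0"
  shows "cauchy_q n xs z = z - of_nat n / cauchy_score n xs z"
proof -
  have "cauchy_h n xs z \<noteq> 0"
    using assms by (auto simp: cauchy_h_def)
  then show ?thesis
    by (simp add: cauchy_q_def DERIV_imp_deriv[OF cauchy_h_has_field_derivative[OF assms]])
qed

lemma cauchy_q_cnj:
  assumes "Im z \<noteq> 0"
  shows "cauchy_q n xs (cnj z) = cnj (cauchy_q n xs z)"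
  using assms by (simp add: cauchy_q_eq_score cauchy_score_cnj)

lemma Im_cauchy_q_upper:
  assumes "2 \<le> n" "inj_on xs {..<n}" "Im z > 0"
  shows "Im (cauchy_q n xs z) < 0"
proof -
  define w where "w j = 1 / (z - of_real (xs j))" for j
  define P where "P = (\<Sum>j<n. (norm (w j))\<^sup>2)"
  have S: "cauchy_score n xs z = (\<Sum>j<n. w j)"
    by (simp add: cauchy_score_def w_def)
  have ImS: "Im (cauchy_score n xs z) = - Im z * P"
    by (simp add: Im_cauchy_score P_def w_def)
  have "w 0 \<noteq> w 1"
    using assms inj_onD[OF assms(2), of 0 1] by (auto simp: w_def)
  then have CS: "(norm (cauchy_score n xs z))\<^sup>2 < n * P"
    unfolding S P_def using assms(1) by (subst card_lessThan[symmetric], intro norm_sum_power2_less) auto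
  then have "0 < P"
    by (smt (verit) of_nat_0_le_iff zero_le_power2 mult_nonneg_nonpos)
  then have "cauchy_score n xs z \<noteq> 0"
    using ImS assms(3) by auto
  then have "Im (of_nat n / cauchy_score n xs z) = n * Im z * P / (norm (cauchy_score n xs z))\<^sup>2"
    by (simp add: Im_divide' ImS)
  also have "\<dots> > Im z"
    using CS \<open>0 < P\<close> \<open>cauchy_score n xs z \<noteq> 0\<close> assms(3) by (simp add: field_simps)
  finally show ?thesis
    using assms(3) by (simp add: cauchy_q_eq_score)
qed

lemma Im_cauchy_q_lower:
  assumes "2 \<le> n" "inj_on xs {..<n}" "Im z < 0"
  shows "Im (cauchy_q n xs z) > 0"
  using Im_cauchy_q_upper[OF assms(1,2), of "cnj z"] assms(3) cauchy_q_cnj[of z n xs] by simp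

lemma cauchy_score_nonzero:
  assumes "0 < n" "Im z \<noteq> 0"
  shows "cauchy_score n xs z \<noteq> 0"
proof -
  have "z - of_real (xs 0) \<noteq> 0"
    using assms(2) by auto
  then have "0 < (norm (1 / (z - of_real (xs 0))))\<^sup>2"
    by simp
  also have "\<dots> \<le> (\<Sum>j<n. (norm (1 / (z - of_real (xs j))))\<^sup>2)"
    using assms(1) by (intro member_le_sum) auto
  finally show ?thesis
    using assms(2) Im_cauchy_score[of n xs z] by auto
qed

lemma cauchy_q_has_field_derivative:
  assumes "0 < n" "Im z \<noteq> 0"
  shows "(cauchy_q n xs has_field_derivative
           1 - of_nat n * (\<Sum>j<n. 1 / (z - of_real (xs j))\<^sup>2) / (cauchy_score n xs z)\<^sup>2) (at z)"
proof -
  have score: "(cauchy_score n xs has_field_derivative - (\<Sum>j<n. 1 / (z - of_real (xs j))\<^sup>2)) (at z)"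
    unfolding cauchy_score_def[abs_def] using assms(2)
    by (auto intro!: derivative_eq_intros simp: sum_negf[symmetric] power2_eq_square complex_eq_iff
        simp del: sum_negf)
  have "((\<lambda>z. z - of_nat n / cauchy_score n xs z) has_field_derivative
           1 - of_nat n * (\<Sum>j<n. 1 / (z - of_real (xs j))\<^sup>2) / (cauchy_score n xs z)\<^sup>2) (at z)"
    using cauchy_score_nonzero[OF assms]
    by (auto intro!: derivative_eq_intros score simp: power2_eq_square)
  then show ?thesis
    by (rule has_field_derivative_transform_within_open[where S = "{w. Im w \<noteq> 0}"])
       (use assms(2) in \<open>auto simp: cauchy_q_eq_score intro!: open_Collect_neq continuous_intros\<close>)
qed

lemma cauchy_Q_upper_half_self_map:
  assumes "2 \<le> n" "inj_on xs {..<n}"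
  shows "cauchy_Q n xs ` upper_half \<subseteq> upper_half"
  using Im_cauchy_q_lower[OF assms Im_cauchy_q_upper[OF assms]]
  by (auto simp: cauchy_Q_def upper_half_def)

lemma cauchy_Q_has_field_derivative:
  assumes "2 \<le> n" "inj_on xs {..<n}" "z \<in> upper_half"
  shows "(cauchy_Q n xs has_field_derivative
           deriv (cauchy_q n xs) (cauchy_q n xs z) * deriv (cauchy_q n xs) z) (at z)"
proof -
  have q_deriv: "(cauchy_q n xs has_field_derivative deriv (cauchy_q n xs) w) (at w)" if "Im w \<noteq> 0" for w
  proof -
    have "0 < n"
      using assms(1) by simp
    from cauchy_q_has_field_derivative[OF this that] show ?thesis
      by (metis DERIV_imp_deriv)
  qed
  have "Im z > 0"
    using assms(3) by (simp add: upper_half_def)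
  then have "Im z \<noteq> 0" "Im (cauchy_q n xs z) \<noteq> 0"
    using Im_cauchy_q_upper[OF assms(1,2)] by force+
  then show ?thesis
    unfolding cauchy_Q_def[abs_def] by (intro DERIV_chain2 q_deriv)
qed

lemma cauchy_Q_holomorphic:
  assumes "2 \<le> n" "inj_on xs {..<n}"
  shows "cauchy_Q n xs holomorphic_on upper_half"
  using cauchy_Q_has_field_derivative[OF assms]
  unfolding holomorphic_on_open[OF open_upper_half] by blast

section \<open>The maximum likelihood estimate\<close>

definition cauchy_loglik :: "nat \<Rightarrow> (nat \<Rightarrow> real) \<Rightarrow> complex \<Rightarrow> real" where
  "cauchy_loglik n xs \<theta> = (\<Sum>j<n. ln (Im \<theta>) - ln ((xs j - Re \<theta>)\<^sup>2 + (Im \<theta>)\<^sup>2))"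

lemma cauchy_lik_pos: "Im \<theta> > 0 \<Longrightarrow> cauchy_lik n xs \<theta> > 0"
  unfolding cauchy_lik_def by (intro prod_pos divide_pos_pos mult_pos_pos add_nonneg_pos) auto

lemma ln_cauchy_lik:
  assumes "Im \<theta> > 0"
  shows "ln (cauchy_lik n xs \<theta>) = cauchy_loglik n xs \<theta> - n * ln pi"
proof -
  have D: "(xs j - Re \<theta>)\<^sup>2 + (Im \<theta>)\<^sup>2 > 0" for j
    using assms by (intro add_nonneg_pos) auto
  have "ln (cauchy_lik n xs \<theta>) = (\<Sum>j<n. ln (Im \<theta> / (pi * ((xs j - Re \<theta>)\<^sup>2 + (Im \<theta>)\<^sup>2))))"
    unfolding cauchy_lik_def using assms D by (subst ln_prod) auto
  also have "\<dots> = (\<Sum>j<n. (ln (Im \<theta>) - ln ((xs j - Re \<theta>)\<^sup>2 + (Im \<theta>)\<^sup>2)) - ln pi)"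
    using assms D by (intro sum.cong) (auto simp: ln_div ln_mult)
  finally show ?thesis
    by (simp add: cauchy_loglik_def sum_subtractf)
qed

lemma cauchy_loglik_has_derivative_along_line:
  assumes "Im a > 0"
  shows "((\<lambda>t. cauchy_loglik n xs (a + of_real t * v)) has_real_derivative
           2 * Re (v * (of_nat n / (a - cnj a) - cauchy_score n xs a))) (at 0)"
proof -
  define D where "D j = (xs j - Re a)\<^sup>2 + (Im a)\<^sup>2" for j
  have D: "D j > 0" for j
    using assms by (auto simp: D_def intro: add_nonneg_pos)
  have Re_term: "Re (v / (a - of_real (xs j))) = ((Re a - xs j) * Re v + Im a * Im v) / D j" for j
    by (simp add: Re_divide D_def power2_commute)
  have "((\<lambda>t. cauchy_loglik n xs (a + of_real t * v)) has_real_derivative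
          (\<Sum>j<n. Im v / Im a - 2 * Re (v / (a - of_real (xs j))))) (at 0)"
    unfolding cauchy_loglik_def using assms D
    by (auto intro!: derivative_eq_intros sum.cong simp: Re_term D_def field_simps power2_eq_square)
  moreover have "Re (v * (of_nat n / (a - cnj a))) = n * Im v / (2 * Im a)"
    using assms by (simp add: Re_divide complex_eq_iff power2_eq_square)
  ultimately show ?thesis
    by (simp add: cauchy_score_def sum_subtractf sum_distrib_left Re_sum right_diff_distrib)
qed

lemma cauchy_mle_score:
  assumes a: "a \<in> upper_half" and max: "\<forall>\<theta>\<in>upper_half. cauchy_lik n xs \<theta> \<le> cauchy_lik n xs a"
  shows "cauchy_score n xs a = of_nat n / (a - cnj a)"
proof -
  define c where "c = of_nat n / (a - cnj a) - cauchy_score n xs a"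
  define d where "d = Im a / (norm c + 1)"
  have Ima: "Im a > 0"
    using a by (simp add: upper_half_def)
  then have "d > 0"
    by (simp add: d_def add_nonneg_pos)
  have "cauchy_loglik n xs (a + of_real t * cnj c) \<le> cauchy_loglik n xs (a + of_real 0 * cnj c)"
    if "\<bar>0 - t\<bar> < d" for t
  proof -
    have "\<bar>t * Im c\<bar> \<le> d * norm c"
      using that abs_Im_le_cmod[of c] by (simp add: abs_mult mult_mono)
    also have "\<dots> < Im a"
      using Ima by (simp add: d_def pos_divide_less_eq add_nonneg_pos)
    finally have Im_pos: "Im (a + of_real t * cnj c) > 0"
      by simp
    then have "cauchy_lik n xs (a + of_real t * cnj c) \<le> cauchy_lik n xs a"
      using max by (simp add: upper_half_def)
    then have "ln (cauchy_lik n xs (a + of_real t * cnj c)) \<le> ln (cauchy_lik n xs a)"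
      using cauchy_lik_pos[OF Im_pos, of n xs] cauchy_lik_pos[OF Ima, of n xs] by simp
    then show ?thesis
      using ln_cauchy_lik[OF Ima] ln_cauchy_lik[OF Im_pos] by simp
  qed
  \<comment> \<open>in the direction \<open>cnj c\<close> the log-likelihood has derivative \<open>2 \<bar>c\<bar>\<^sup>2\<close>\<close>
  then have "2 * Re (cnj c * c) = 0"
    using DERIV_local_max[OF cauchy_loglik_has_derivative_along_line[OF Ima] \<open>d > 0\<close>]
    unfolding c_def by blast
  moreover have "Re (cnj c * c) = (norm c)\<^sup>2"
    by (metis Re_complex_of_real complex_norm_square mult.commute)
  ultimately have "c = 0"
    by (metis mult_eq_0_iff norm_eq_zero power_eq_0_iff zero_neq_numeral)
  then show ?thesis
    by (simp add: c_def)
qed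

lemma deriv_cauchy_q_at_stationary_point:
  assumes "0 < n" "Im a \<noteq> 0" and score: "cauchy_score n xs a = of_nat n / (a - cnj a)"
  shows "deriv (cauchy_q n xs) a = - (\<Sum>j<n. (1 - (a - cnj a) / (a - of_real (xs j)))\<^sup>2) / of_nat n"
proof -
  define k where "k = a - cnj a"
  define w where "w j = 1 / (a - of_real (xs j))" for j
  have k0: "k \<noteq> 0" and n0: "(of_nat n :: complex) \<noteq> 0"
    using assms(1,2) by (auto simp: k_def complex_eq_iff)
  have "(\<Sum>j<n. 1 - k * w j) = of_nat n - k * cauchy_score n xs a"
    by (simp add: w_def cauchy_score_def sum_subtractf sum_distrib_left)
  then have sum_zero: "(\<Sum>j<n. 1 - k * w j) = 0"
    using k0 by (simp add: score k_def)
  have "deriv (cauchy_q n xs) a = 1 - of_nat n * (\<Sum>j<n. (w j)\<^sup>2) / (of_nat n / k)\<^sup>2"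
    using DERIV_imp_deriv[OF cauchy_q_has_field_derivative[OF assms(1,2)]]
    by (simp add: score k_def w_def power_divide)
  also have "\<dots> = 1 - k\<^sup>2 * (\<Sum>j<n. (w j)\<^sup>2) / of_nat n"
    using k0 n0 by (simp add: power2_eq_square)
  also have "\<dots> = (\<Sum>j<n. 2 * (1 - k * w j) - (1 - k * w j)\<^sup>2) / of_nat n"
    using n0 by (simp add: field_simps power2_eq_square sum_subtractf sum_distrib_left sum.distrib)
  also have "\<dots> = (2 * (\<Sum>j<n. 1 - k * w j) - (\<Sum>j<n. (1 - k * w j)\<^sup>2)) / of_nat n"
    by (simp only: sum_subtractf sum_distrib_left[symmetric])
  also have "\<dots> = - (\<Sum>j<n. (1 - k * w j)\<^sup>2) / of_nat n"
    by (simp only: sum_zero) simp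
  finally show ?thesis
    by (simp add: k_def w_def)
qed

lemma cauchy_q_at_stationary_point:
  assumes "3 \<le> n" "inj_on xs {..<n}" "Im a \<noteq> 0"
    and score: "cauchy_score n xs a = of_nat n / (a - cnj a)"
  shows "cauchy_q n xs a = cnj a" and "norm (deriv (cauchy_q n xs) a) < 1"
proof -
  define y where "y j = 1 - (a - cnj a) / (a - of_real (xs j))" for j
  have ne: "a - of_real (xs j) \<noteq> 0" for j
    using assms(3) by auto
  have "a - cnj a \<noteq> 0" "(of_nat n :: complex) \<noteq> 0"
    using assms(1,3) by (auto simp: complex_eq_iff)
  then show "cauchy_q n xs a = cnj a"
    using assms(3) by (simp add: cauchy_q_eq_score score)
  have y_norm: "norm (y j) = 1" for j
  proof -
    have "y j = (cnj a - of_real (xs j)) / (a - of_real (xs j))"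
      using ne[of j] by (simp add: y_def field_simps)
    moreover have "norm (cnj a - of_real (xs j)) = norm (a - of_real (xs j))"
      by (metis complex_cnj_complex_of_real complex_cnj_diff complex_mod_cnj)
    ultimately show ?thesis
      using ne[of j] by (simp add: norm_divide)
  qed
  have "inj_on y {..<n}"
  proof (rule inj_onI)
    fix i j assume ij: "i \<in> {..<n}" "j \<in> {..<n}" "y i = y j"
    then have "xs i = xs j"
      using \<open>a - cnj a \<noteq> 0\<close> ne[of i] ne[of j] by (simp add: y_def field_simps)
    then show "i = j"
      using inj_onD[OF assms(2)] ij by blast
  qed
  then show "norm (deriv (cauchy_q n xs) a) < 1"
    using norm_sum_power2_unimodular_less[of "{..<n}" y] assms(1) y_norm
      deriv_cauchy_q_at_stationary_point[OF _ assms(3) score]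
    by (simp add: y_def norm_divide)
qed

lemma cauchy_Q_attracting_at_mle:
  assumes "3 \<le> n" "inj_on xs {..<n}"
    and a: "a \<in> upper_half" and max: "\<forall>\<theta>\<in>upper_half. cauchy_lik n xs \<theta> \<le> cauchy_lik n xs a"
  shows "cauchy_Q n xs a = a" and "norm (deriv (cauchy_Q n xs) a) < 1"
proof -
  have Ima: "Im a \<noteq> 0" "Im (cnj a) \<noteq> 0"
    using a by (auto simp: upper_half_def)
  have score: "cauchy_score n xs a = of_nat n / (a - cnj a)"
    by (rule cauchy_mle_score[OF a max])
  then have "cauchy_score n xs (cnj a) = of_nat n / (cnj a - cnj (cnj a))"
    by (simp add: cauchy_score_cnj)
  note at_a = cauchy_q_at_stationary_point[OF assms(1,2) Ima(1) score]
    and at_cnj_a = cauchy_q_at_stationary_point[OF assms(1,2) Ima(2) this]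
  show "cauchy_Q n xs a = a"
    using at_a(1) at_cnj_a(1) by (simp add: cauchy_Q_def)
  have "deriv (cauchy_Q n xs) a = deriv (cauchy_q n xs) (cnj a) * deriv (cauchy_q n xs) a"
    using DERIV_imp_deriv[OF cauchy_Q_has_field_derivative[OF _ assms(2) a]] assms(1) at_a(1) by simp
  moreover have "norm (deriv (cauchy_q n xs) (cnj a)) * norm (deriv (cauchy_q n xs) a)
                   \<le> 1 * norm (deriv (cauchy_q n xs) a)"
    using at_cnj_a(2) by (intro mult_right_mono) auto
  ultimately show "norm (deriv (cauchy_Q n xs) a) < 1"
    using at_a(2) by (simp add: norm_mult)
qed

theorem mainTheorem1:
  fixes n :: nat and xs :: "nat \<Rightarrow> real" and \<theta>hat :: complex
  assumes "n \<ge> 3"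
    and "inj_on xs {..<n}"
    and "\<theta>hat \<in> upper_half"
    and "\<forall>\<theta>\<in>upper_half. cauchy_lik n xs \<theta> \<le> cauchy_lik n xs \<theta>hat"
  shows "{z \<in> upper_half. z = cauchy_Q n xs z} = {\<theta>hat}
         \<and> cauchy_Q n xs \<theta>hat = \<theta>hat
         \<and> (\<forall>z\<in>upper_half.
           (\<lambda>m. (cauchy_Q n xs ^^ m) z) \<longlonglongrightarrow> \<theta>hat \<and>
           (\<exists>C>0. \<exists>r. 0 < r \<and> r < 1 \<and>
              (\<forall>m. cmod ((cauchy_Q n xs ^^ m) z - \<theta>hat) \<le> C * r ^ m)))"
proof -
  have "2 \<le> n"
    using assms(1) by simp
  note attracting = cauchy_Q_holomorphic[OF this assms(2)] cauchy_Q_upper_half_self_map[OF this assms(2)]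
    assms(3) cauchy_Q_attracting_at_mle[OF assms]
  have "\<exists>C>0. \<exists>r. 0 < r \<and> r < 1 \<and> (\<forall>m. norm ((cauchy_Q n xs ^^ m) z - \<theta>hat) \<le> C * r ^ m)"
    if "z \<in> upper_half" for z
    using attracting_fixpoint_upper_half_geometric[OF attracting that] by metis
  then show ?thesis
    using attracting_fixpoint_upper_half_unique[OF attracting]
      attracting_fixpoint_upper_half_tendsto[OF attracting] attracting(4) by simp
qed

end
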